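(* Let $k\ge 2$ and let $P=(p_1,\dots,p_k)$ and $Q=(q_1,\dots,q_k)$ be two multinomial (categorical) probability distributions over the same index set $\{1,\dots,k\}$. Suppose the indices of the largest probabilities of $P$ and $Q$ do not match, i.e. $\arg\max_i p_i \neq \arg\max_j q_j$. Then $$d_{KL}(Q,P)\;\ge\; -\log\bigl(2\sqrt{p_{(1)}p_{(2)}}+1-p_{(1)}-p_{(2)}\bigr),$$ where $p_{(1)}$ and $p_{(2)}$ denote the first and second largest probabilities among $p_1,\dots,p_k$.
   Context: The Kullback–Leibler divergence is $d_{KL}(Q,P)=\sum_{i=1}^k q_i\log\frac{q_i}{p_i}$ (with the usual conventions $0\log 0=0$, and $d_{KL}=+\infty$ if some $q_i>0=p_i$). *)

theory Defs
  imports "HOL-Analysis.Analysis"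
begin

definition is_prob_vec :: "nat \<Rightarrow> (nat \<Rightarrow> real) \<Rightarrow> bool" where
  "is_prob_vec k p \<longleftrightarrow> (\<forall>i\<in>{1..k}. 0 \<le> p i) \<and> (\<Sum>i=1..k. p i) = 1"

definition kl_div :: "nat \<Rightarrow> (nat \<Rightarrow> real) \<Rightarrow> (nat \<Rightarrow> real) \<Rightarrow> ereal" where
  "kl_div k q p =
     (if \<exists>i\<in>{1..k}. q i > 0 \<and> p i = 0 then PInfty
      else ereal (\<Sum>i=1..k. if q i = 0 then 0 else q i * ln (q i / p i)))"

text \<open>i-th largest value (0-based position in descending order, with multiplicity).\<close>
definition order_stat :: "nat \<Rightarrow> (nat \<Rightarrow> real) \<Rightarrow> nat \<Rightarrow> real" where
  "order_stat k p r = rev (sort (map p [1..<k+1])) ! r"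

definition neg_ln :: "real \<Rightarrow> ereal" where
  "neg_ln x = (if x \<le> 0 then PInfty else ereal (- ln x))"

end

(* For every positive weight function g, d_KL(Q,P) >= E_Q[ln g] - ln E_P[g] (the
   Donsker-Varadhan variational inequality; pointwise it is just ln x >= 1 - 1/x).
   Take for g the tilt multiplying the P-argmax i by a = sqrt (p_j / p_i) and the Q-argmax j
   by 1/a. Then E_P[g] = 2 sqrt (p_i p_j) + 1 - p_i - p_j = 1 - (sqrt p_i - sqrt p_j)^2,
   while E_Q[ln g] = (q_i - q_j) ln a >= 0 because q_i <= q_j and a <= 1.
   Finally p_i = p_(1) and p_j <= p_(2) <= p_(1), and 1 - (sqrt p_(1) - sqrt y)^2 increases
   in y on [0, p_(1)]. *)
theory Submission
  imports Defs
begin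

definition rel_entropy :: "'a set \<Rightarrow> ('a \<Rightarrow> real) \<Rightarrow> ('a \<Rightarrow> real) \<Rightarrow> real" where
  "rel_entropy S q p = (\<Sum>l\<in>S. if q l = 0 then 0 else q l * ln (q l / p l))"

lemma kl_div_eq_rel_entropy:
  assumes "\<forall>l\<in>{1..k}. q l > 0 \<longrightarrow> p l \<noteq> 0"
  shows "kl_div k q p = ereal (rel_entropy {1..k} q p)"
  using assms by (auto simp: kl_div_def rel_entropy_def)

lemma rel_entropy_ge_tilted:
  fixes p q g :: "'a \<Rightarrow> real"
  assumes "finite S" and p_nonneg: "\<forall>l\<in>S. 0 \<le> p l" and q_nonneg: "\<forall>l\<in>S. 0 \<le> q l"
    and q_sum: "sum q S = 1" and supp: "\<forall>l\<in>S. q l > 0 \<longrightarrow> p l > 0"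
    and g_pos: "\<forall>l\<in>S. g l > 0"
  shows "rel_entropy S q p \<ge> (\<Sum>l\<in>S. q l * ln (g l)) - ln (\<Sum>l\<in>S. p l * g l)"
proof -
  define Z where "Z = (\<Sum>l\<in>S. p l * g l)"
  obtain m where "m \<in> S" "q m > 0"
  proof (rule ccontr)
    assume "\<not> thesis"
    then have "\<forall>l\<in>S. q l \<le> 0" using that by (meson not_le)
    then have "sum q S \<le> 0" by (simp add: sum_nonpos)
    then show False using q_sum by simp
  qed
  then have "p m * g m > 0" using supp g_pos by simp
  moreover have "p m * g m \<le> Z"
    unfolding Z_def using \<open>finite S\<close> \<open>m \<in> S\<close> p_nonneg g_pos
    by (intro member_le_sum) (auto simp: less_imp_le)
  ultimately have Z_pos: "Z > 0" by linarith
  have pointwise: "(if q l = 0 then 0 else q l * ln (q l / p l))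
                   \<ge> q l * ln (g l) - q l * ln Z + q l - p l * g l / Z" if "l \<in> S" for l
  proof (cases "q l = 0")
    case True
    then show ?thesis using that p_nonneg g_pos Z_pos by (simp add: less_imp_le)
  next
    case False
    then have ql: "q l > 0" using that q_nonneg by (simp add: less_le)
    then have pl: "p l > 0" using that supp by simp
    have gl: "g l > 0" using that g_pos by simp
    define x where "x = q l * Z / (p l * g l)"
    have x_pos: "x > 0" using ql pl gl Z_pos by (simp add: x_def)
    have "ln (1 / x) \<le> 1 / x - 1" using x_pos by (intro ln_le_minus_one) simp
    then have "ln x \<ge> 1 - 1 / x" using x_pos by (simp add: ln_div)
    moreover have "ln x = ln (q l / p l) + ln Z - ln (g l)"
      using ql pl gl Z_pos by (simp add: x_def ln_div ln_mult)
    ultimately have "ln (q l / p l) \<ge> ln (g l) - ln Z + 1 - p l * g l / (Z * q l)"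
      by (simp add: x_def mult.commute)
    then have "q l * ln (q l / p l) \<ge> q l * (ln (g l) - ln Z + 1 - p l * g l / (Z * q l))"
      using ql by (intro mult_left_mono) auto
    then show ?thesis using False ql Z_pos by (simp add: algebra_simps)
  qed
  have "rel_entropy S q p \<ge> (\<Sum>l\<in>S. q l * ln (g l) - q l * ln Z + q l - p l * g l / Z)"
    unfolding rel_entropy_def using pointwise by (intro sum_mono) auto
  also have "(\<Sum>l\<in>S. q l * ln (g l) - q l * ln Z + q l - p l * g l / Z)
      = (\<Sum>l\<in>S. q l * ln (g l)) - sum q S * ln Z + sum q S - (\<Sum>l\<in>S. p l * g l) / Z"
    by (simp add: sum.distrib sum_subtractf flip: sum_distrib_right sum_divide_distrib)
  also have "\<dots> = (\<Sum>l\<in>S. q l * ln (g l)) - ln Z"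
    using q_sum Z_pos by (simp add: Z_def)
  finally show ?thesis unfolding Z_def .
qed

lemma neg_ln_antimono:
  assumes "x \<le> y"
  shows "neg_ln y \<le> neg_ln x"
  using assms by (simp add: neg_ln_def)

lemma rel_entropy_ge_two_point_tilt:
  fixes p q :: "'a \<Rightarrow> real"
  assumes "finite S" and p_nonneg: "\<forall>l\<in>S. 0 \<le> p l" and p_sum: "sum p S = 1"
    and q_nonneg: "\<forall>l\<in>S. 0 \<le> q l" and q_sum: "sum q S = 1"
    and supp: "\<forall>l\<in>S. q l > 0 \<longrightarrow> p l > 0"
    and "i \<in> S" "j \<in> S" "i \<noteq> j" "q i \<le> q j" "0 < p j" "p j \<le> p i"
  shows "neg_ln (2 * sqrt (p i * p j) + 1 - p i - p j) \<le> ereal (rel_entropy S q p)"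
proof -
  define Z where "Z = 2 * sqrt (p i * p j) + 1 - p i - p j"
  define a where "a = sqrt (p j / p i)"
  define g where "g l = (if l = i then a else if l = j then 1 / a else 1)" for l
  have pi: "p i > 0" using assms by linarith
  have a_pos: "a > 0" and a_le_1: "a \<le> 1"
    using pi assms by (simp_all add: a_def)
  have "p i * a = sqrt (p i * p j)" and "p j / a = sqrt (p i * p j)"
    using pi \<open>0 < p j\<close> by (simp_all add: a_def real_sqrt_divide real_sqrt_mult field_simps)
  moreover have "p l * g l = p l + (if l = i then p i * a - p i else 0)
                             + (if l = j then p j / a - p j else 0)" for l
    using \<open>i \<noteq> j\<close> by (simp add: g_def)
  ultimately have partition: "(\<Sum>l\<in>S. p l * g l) = Z"
    using \<open>finite S\<close> \<open>i \<in> S\<close> \<open>j \<in> S\<close> p_sum by (simp add: Z_def sum.distrib)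
  have "q l * ln (g l) = (if l = i then q i * ln a else 0) + (if l = j then - q j * ln a else 0)"
    for l
    using \<open>i \<noteq> j\<close> a_pos by (simp add: g_def ln_div)
  then have "(\<Sum>l\<in>S. q l * ln (g l)) = (q i - q j) * ln a"
    using \<open>finite S\<close> \<open>i \<in> S\<close> \<open>j \<in> S\<close> by (simp add: sum.distrib algebra_simps)
  also have "\<dots> \<ge> 0"
    using \<open>q i \<le> q j\<close> a_pos a_le_1 by (intro mult_nonpos_nonpos) auto
  finally have "(\<Sum>l\<in>S. q l * ln (g l)) \<ge> 0" .
  moreover have "\<forall>l\<in>S. g l > 0" using a_pos by (simp add: g_def)
  ultimately have KL: "- ln Z \<le> rel_entropy S q p"
    using rel_entropy_ge_tilted[OF \<open>finite S\<close> p_nonneg q_nonneg q_sum supp] partition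
    by fastforce
  have "p i + p j \<le> 1"
    using sum_mono2[OF \<open>finite S\<close>, of "{i, j}" p] assms(7-9) p_nonneg p_sum by simp
  moreover have "sqrt (p i * p j) > 0" using pi \<open>0 < p j\<close> by simp
  ultimately have "Z > 0" unfolding Z_def by linarith
  then show ?thesis using KL by (simp add: Z_def [symmetric] neg_ln_def)
qed

lemma sorted_wrt_rev_sort: "sorted_wrt (\<ge>) (rev (sort L))"
  by (simp add: sorted_wrt_rev)

lemma rev_sort_nth_0_eq_Max:
  fixes L :: "'a::linorder list"
  assumes "x \<in> set L" and "\<forall>z\<in>set L. z \<le> x"
  shows "rev (sort L) ! 0 = x"
proof -
  obtain a rest where xs: "rev (sort L) = a # rest"
    using assms(1) by (metis neq_Nil_conv empty_iff list.set(1) set_rev set_sort)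
  have "a \<in> set L" by (metis xs list.set_intros(1) set_rev set_sort)
  moreover have "x \<in> set (a # rest)" by (metis xs assms(1) set_rev set_sort)
  then have "x \<le> a" using sorted_wrt_rev_sort[of L] unfolding xs by auto
  ultimately show ?thesis using assms(2) xs by (simp add: antisym)
qed

lemma rev_sort_nth_1_le_nth_0:
  fixes L :: "'a::linorder list"
  assumes "length L \<ge> 2"
  shows "rev (sort L) ! 1 \<le> rev (sort L) ! 0"
proof -
  obtain a b rest where xs: "rev (sort L) = a # b # rest"
    using assms by (metis length_rev length_sort Suc_le_length_iff numeral_2_eq_2)
  show ?thesis using sorted_wrt_rev_sort[of L] by (simp add: xs)
qed

lemma rev_sort_nth_1_ge_min:
  fixes L :: "'a::linorder list"
  assumes "{#x, y#} \<subseteq># mset L"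
  shows "min x y \<le> rev (sort L) ! 1"
proof -
  have "size (mset L) \<ge> 2" using size_mset_mono[OF assms] by simp
  then obtain a b rest where xs: "rev (sort L) = a # b # rest"
    by (metis size_mset length_rev length_sort Suc_le_length_iff numeral_2_eq_2)
  have "{#x, y#} \<subseteq># add_mset a (mset (b # rest))"
    by (metis assms xs mset.simps(2) mset_rev mset_sort)
  then have "x \<in># mset (b # rest) \<or> y \<in># mset (b # rest)"
    by (metis insert_noteq_member insert_subset_eq_iff
        mset_subset_eq_add_mset_cancel multi_member_split)
  then have "x \<le> b \<or> y \<le> b"
    using sorted_wrt_rev_sort[of L] by (auto simp: xs simp del: mset.simps)
  then show ?thesis by (auto simp: xs min_le_iff_disj)
qed

lemma order_stat_0_eq_max:
  assumes "i \<in> {1..k}" and "\<forall>l\<in>{1..k}. p l \<le> p i"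
  shows "order_stat k p 0 = p i"
  unfolding order_stat_def using assms
  by (intro rev_sort_nth_0_eq_Max) (auto simp del: upt_Suc)

lemma order_stat_1_le_0:
  assumes "k \<ge> 2"
  shows "order_stat k p 1 \<le> order_stat k p 0"
  unfolding order_stat_def using assms by (intro rev_sort_nth_1_le_nth_0) simp

lemma order_stat_1_ge_min:
  assumes "i \<in> {1..k}" and "j \<in> {1..k}" and "i \<noteq> j"
  shows "min (p i) (p j) \<le> order_stat k p 1"
  unfolding order_stat_def
proof (rule rev_sort_nth_1_ge_min)
  have "i \<in> set [1..<k+1]" and "j \<in> set [1..<k+1]"
    using assms(1,2) by (simp_all del: upt_Suc)
  then have sub: "{#i, j#} \<subseteq># mset [1..<k+1]"
    using assms(3) by (metis insert_DiffM insert_noteq_member insert_subset_eq_iff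
        set_mset_mset single_subset_iff)
  show "{#p i, p j#} \<subseteq># mset (map p [1..<k+1])"
    using image_mset_subseteq_mono[OF sub, of p] by (simp del: upt_Suc)
qed

lemma is_prob_vec_max_pos:
  assumes "is_prob_vec k p" and "\<forall>l\<in>{1..k}. p l \<le> p j"
  shows "p j > 0"
proof -
  have "1 \<le> real k * p j"
    using assms sum_bounded_above[of "{1..k}" p "p j"] by (simp add: is_prob_vec_def)
  show ?thesis
  proof (rule ccontr)
    assume "\<not> p j > 0"
    then have "real k * p j \<le> 0" by (simp add: mult_nonneg_nonpos)
    with \<open>1 \<le> real k * p j\<close> show False by simp
  qed
qed

lemma two_sqrt_mult_minus_mono:
  fixes x y y' :: real
  assumes "0 \<le> y" and "y \<le> y'" and "y' \<le> x"
  shows "2 * sqrt (x * y) - y \<le> 2 * sqrt (x * y') - y'"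
proof -
  have gap: "2 * sqrt (x * z) - x - z = - (sqrt x - sqrt z)\<^sup>2" if "0 \<le> z" "z \<le> x" for z
    using that by (simp add: power2_eq_square real_sqrt_mult algebra_simps)
  have "(sqrt x - sqrt y')\<^sup>2 \<le> (sqrt x - sqrt y)\<^sup>2"
    using assms by (intro power_mono) auto
  then show ?thesis using gap[of y] gap[of y'] assms by linarith
qed

theorem mainTheorem1:
  fixes k :: nat and p q :: "nat \<Rightarrow> real" and i j :: nat
  assumes "k \<ge> 2"
    and "is_prob_vec k p" and "is_prob_vec k q"
    and "i \<in> {1..k}" and "\<forall>l\<in>{1..k}. p l \<le> p i"
    and "j \<in> {1..k}" and "\<forall>l\<in>{1..k}. q l \<le> q j"
    and "i \<noteq> j"
  shows "kl_div k q p \<ge>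
           neg_ln (2 * sqrt (order_stat k p 0 * order_stat k p 1) + 1
                   - order_stat k p 0 - order_stat k p 1)"
proof (cases "\<exists>l\<in>{1..k}. q l > 0 \<and> p l = 0")
  case True
  then show ?thesis by (simp add: kl_div_def)
next
  case False
  have p_nonneg: "\<forall>l\<in>{1..k}. 0 \<le> p l" and p_sum: "sum p {1..k} = 1"
    and q_nonneg: "\<forall>l\<in>{1..k}. 0 \<le> q l" and q_sum: "sum q {1..k} = 1"
    using assms(2,3) by (simp_all add: is_prob_vec_def)
  have supp: "\<forall>l\<in>{1..k}. q l > 0 \<longrightarrow> p l > 0"
    using False p_nonneg by force
  have pj: "p j > 0" using is_prob_vec_max_pos[OF assms(3,7)] supp assms(6) by blast
  have pj_le_pi: "p j \<le> p i" using assms(5,6) by blast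
  have "neg_ln (2 * sqrt (order_stat k p 0 * order_stat k p 1) + 1
                - order_stat k p 0 - order_stat k p 1)
        \<le> neg_ln (2 * sqrt (p i * p j) + 1 - p i - p j)"
    using two_sqrt_mult_minus_mono[of "p j" "order_stat k p 1" "p i"]
      order_stat_0_eq_max[OF assms(4,5)] order_stat_1_ge_min[OF assms(4,6,8), of p]
      order_stat_1_le_0[OF assms(1), of p] pj pj_le_pi
    by (intro neg_ln_antimono) (simp add: min_absorb2)
  also have "\<dots> \<le> ereal (rel_entropy {1..k} q p)"
    using assms(4,6,7,8) pj pj_le_pi
    by (intro rel_entropy_ge_two_point_tilt[OF _ p_nonneg p_sum q_nonneg q_sum supp]) auto
  also have "\<dots> = kl_div k q p" using supp by (intro kl_div_eq_rel_entropy[symmetric]) auto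
  finally show ?thesis .
qed

end
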